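(* Let $C=(C_1,C_2)$ be an equitable partition of $J(n,w)$ with quotient matrix $\begin{pmatrix} a & b\\ c& d\end{pmatrix}$, where $b+c>0$, and let $f=\chi_{C_1}$. Then $$\frac{bc}{b+c}\binom{n}{w}=\sum_{1\le i<j\le n}|S(f_{i,j})|,$$ where $S(f_{i,j})$ denotes the support (set of nonzeros) of the partial difference $f_{i,j}$.
   Context: The Johnson graph $J(n,w)$ has as vertices the binary vectors of length $n$ with exactly $w$ ones; two vertices are adjacent iff they have exactly $w-1$ common ones. An equitable partition $(C_1,C_2)$ with quotient matrix $(s_{ij})$: every vertex of $C_i$ has exactly $s_{ij}$ neighbours in $C_j$. $\chi_{C_1}$ is the characteristic function of $C_1$. For $f:J(n,w)\to\mathbb{R}$ and $i<j$, the partial difference $f_{i,j}:J(n-2,w-1)\to\mathbb{R}$ is $f_{i,j}(y)=f(y^{(1,0)})-f(y^{(0,1)})$, where $y$ is indexed by $\{1,\dots,n\}\setminus\{i,j\}$ and $y^{(a,b)}$ is obtained by inserting $a$ at position $i$ and $b$ at position $j$. *)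

theory Defs
  imports Complex_Main
begin

text \<open>A binary vector of length n with exactly w ones is identified with the set
  of positions (a subset of {1..n}) carrying a one.\<close>

definition johnson_vertices :: "nat \<Rightarrow> nat \<Rightarrow> nat set set" where
  "johnson_vertices n w = {x. x \<subseteq> {1..n} \<and> card x = w}"

definition johnson_adj :: "nat \<Rightarrow> nat set \<Rightarrow> nat set \<Rightarrow> bool" where
  "johnson_adj w x y \<longleftrightarrow> card (x \<inter> y) + 1 = w"

definition equitable_partition2 ::
  "nat \<Rightarrow> nat \<Rightarrow> nat set set \<Rightarrow> nat set set \<Rightarrow> nat \<Rightarrow> nat \<Rightarrow> nat \<Rightarrow> nat \<Rightarrow> bool" where
  "equitable_partition2 n w C1 C2 a b c d \<longleftrightarrow>
     C1 \<noteq> {} \<and> C2 \<noteq> {} \<and> C1 \<inter> C2 = {} \<and> C1 \<union> C2 = johnson_vertices n w \<and>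
     (\<forall>x\<in>C1. card {y\<in>C1. johnson_adj w x y} = a \<and> card {y\<in>C2. johnson_adj w x y} = b) \<and>
     (\<forall>x\<in>C2. card {y\<in>C1. johnson_adj w x y} = c \<and> card {y\<in>C2. johnson_adj w x y} = d)"

definition char_fun :: "nat set set \<Rightarrow> nat set \<Rightarrow> real" where
  "char_fun C x = (if x \<in> C then 1 else 0)"

text \<open>Partial difference f_{i,j}: a function on J(n-2,w-1), whose vertices are the
  (w-1)-subsets y of {1..n} - {i,j}; y^(1,0) = insert i y, y^(0,1) = insert j y.\<close>
definition partial_diff :: "(nat set \<Rightarrow> real) \<Rightarrow> nat \<Rightarrow> nat \<Rightarrow> nat set \<Rightarrow> real" where
  "partial_diff f i j y = f (insert i y) - f (insert j y)"

definition partial_diff_domain :: "nat \<Rightarrow> nat \<Rightarrow> nat \<Rightarrow> nat \<Rightarrow> nat set set" where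
  "partial_diff_domain n w i j = {y. y \<subseteq> {1..n} - {i, j} \<and> card y = w - 1}"

definition diff_support :: "nat \<Rightarrow> nat \<Rightarrow> (nat set \<Rightarrow> real) \<Rightarrow> nat \<Rightarrow> nat \<Rightarrow> nat set set" where
  "diff_support n w f i j = {y \<in> partial_diff_domain n w i j. partial_diff f i j y \<noteq> 0}"

end

theory Submission
  imports Defs
begin

(* Both sides count the edges of J(n,w) between C1 and C2.  Counting them from C1 and from C2
   gives |C1| b = |C2| c, and with |C1| + |C2| = binom n w this number is bc/(b+c) binom n w.
   On the other hand an edge is the same thing as a pair i < j together with a (w-1)-set y
   avoiding i and j, namely the edge between y + i and y + j; it joins C1 to C2 exactly when
   f = chi_C1 takes different values at its ends, i.e. when y lies in the support of f_ij. *)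

lemma finite_johnson_vertices: "finite (johnson_vertices n w)"
  unfolding johnson_vertices_def by (rule finite_subset[of _ "Pow {1..n}"]) auto

lemma card_johnson_vertices: "card (johnson_vertices n w) = n choose w"
  unfolding johnson_vertices_def using n_subsets[of "{1..n}" w] by simp

lemma johnson_adj_commute: "johnson_adj w x y = johnson_adj w y x"
  unfolding johnson_adj_def by (simp add: Int_commute)

lemma johnson_adj_insert_insert:
  assumes "finite y" "i \<notin> y" "j \<notin> y" "i \<noteq> j"
  shows "johnson_adj (card y + 1) (insert i y) (insert j y)"
proof -
  have "insert i y \<inter> insert j y = y" using assms by auto
  then show ?thesis unfolding johnson_adj_def by simp
qed

lemma johnson_adj_obtain_insert:
  assumes "finite x" "finite x'" "card x = w" "card x' = w" "johnson_adj w x x'"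
  obtains i j where "i \<noteq> j" "i \<notin> x \<inter> x'" "j \<notin> x \<inter> x'"
    and "x = insert i (x \<inter> x')" "x' = insert j (x \<inter> x')"
proof -
  have "card (x - x') = 1" "card (x' - x) = 1"
    using assms by (simp_all add: johnson_adj_def card_Diff_subset_Int Int_commute)
  then obtain i j where i: "x - x' = {i}" and j: "x' - x = {j}" by (meson card_1_singletonE)
  show ?thesis
  proof
    show "i \<noteq> j" "i \<notin> x \<inter> x'" "j \<notin> x \<inter> x'" using i j by auto
    show "x = insert i (x \<inter> x')" using i by auto
    show "x' = insert j (x \<inter> x')" using j by auto
  qed
qed

lemma insert_pair_eq_insert_pairD:
  fixes i j i' j' :: "'a :: order"
  assumes "i \<notin> y" "j \<notin> y" "i < j" "i' \<notin> y'" "j' \<notin> y'" "i' < j'"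
    and "{insert i y, insert j y} = {insert i' y', insert j' y'}"
  shows "i = i' \<and> j = j' \<and> y = y'"
proof -
  have "insert i y \<inter> insert j y = y" "insert i' y' \<inter> insert j' y' = y'"
    using assms(1-6) by auto
  moreover have "insert i y \<inter> insert j y = insert i' y' \<inter> insert j' y'"
    using assms(7) by (metis Int_commute doubleton_eq_iff)
  ultimately have "y' = y" by simp
  with assms(7) have "insert i y = insert i' y \<and> insert j y = insert j' y
      \<or> insert i y = insert j' y \<and> insert j y = insert i' y"
    by (simp add: doubleton_eq_iff)
  moreover have "insert k y = insert l y \<longleftrightarrow> k = l" if "k \<notin> y" "l \<notin> y" for k l
    using that by blast
  ultimately show ?thesis using assms \<open>y' = y\<close> by auto
qed

lemma card_related_pairs_left:
  assumes "finite A" "finite B" "\<And>x. x \<in> A \<Longrightarrow> card {y \<in> B. R x y} = k"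
  shows "card {(x, y). x \<in> A \<and> y \<in> B \<and> R x y} = card A * k"
proof -
  have "{(x, y). x \<in> A \<and> y \<in> B \<and> R x y} = Sigma A (\<lambda>x. {y \<in> B. R x y})" by auto
  with assms show ?thesis by (simp add: card_SigmaI)
qed

lemma card_related_pairs_right:
  assumes "finite A" "finite B" "\<And>y. y \<in> B \<Longrightarrow> card {x \<in> A. R x y} = k"
  shows "card {(x, y). x \<in> A \<and> y \<in> B \<and> R x y} = card B * k"
proof -
  have "{(x, y). x \<in> A \<and> y \<in> B \<and> R x y} = prod.swap ` {(y, x). y \<in> B \<and> x \<in> A \<and> R x y}"
    by auto
  then have "card {(x, y). x \<in> A \<and> y \<in> B \<and> R x y} = card {(y, x). y \<in> B \<and> x \<in> A \<and> R x y}"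
    by (simp add: card_image)
  also have "\<dots> = card B * k" using assms by (intro card_related_pairs_left) auto
  finally show ?thesis .
qed

definition cut_edges :: "nat \<Rightarrow> nat set set \<Rightarrow> nat set set \<Rightarrow> (nat set \<times> nat set) set" where
  "cut_edges w C C' = {(x, x'). x \<in> C \<and> x' \<in> C' \<and> johnson_adj w x x'}"

lemma mem_diff_support_char_fun_iff:
  "y \<in> diff_support n w (char_fun C) i j \<longleftrightarrow>
     y \<in> partial_diff_domain n w i j \<and> (insert i y \<in> C \<longleftrightarrow> insert j y \<notin> C)"
  unfolding diff_support_def partial_diff_def char_fun_def by auto

definition oriented_edge :: "nat set set \<Rightarrow> nat \<Rightarrow> nat \<Rightarrow> nat set \<Rightarrow> nat set \<times> nat set" where
  "oriented_edge C i j y =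
     (if insert i y \<in> C then (insert i y, insert j y) else (insert j y, insert i y))"

lemma oriented_edge_ends:
  "{fst (oriented_edge C i j y), snd (oriented_edge C i j y)} = {insert i y, insert j y}"
  unfolding oriented_edge_def by auto

lemma inj_on_oriented_edge:
  "inj_on (\<lambda>((i, j), y). oriented_edge C i j y) {((i, j), y). i < j \<and> i \<notin> y \<and> j \<notin> y}"
proof (rule inj_onI, clarsimp)
  fix i j y i' j' y'
  assume "i < j" "i \<notin> y" "j \<notin> y" "i' < j'" "i' \<notin> y'" "j' \<notin> y'"
    and "oriented_edge C i j y = oriented_edge C i' j' y'"
  then show "i = i' \<and> j = j' \<and> y = y'"
    by (intro insert_pair_eq_insert_pairD) (metis oriented_edge_ends)+
qed

lemma oriented_edge_mem_cut_edges:
  assumes "C \<subseteq> johnson_vertices n w" "i < j" "j \<le> n" "1 \<le> i"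
    and "y \<in> diff_support n w (char_fun C) i j"
  shows "oriented_edge C i j y \<in> cut_edges w C (johnson_vertices n w - C)"
proof -
  have y: "y \<subseteq> {1..n} - {i, j}" and C: "insert i y \<in> C \<longleftrightarrow> insert j y \<notin> C"
    using assms(5) by (auto simp: mem_diff_support_char_fun_iff partial_diff_domain_def)
  have "finite y" "i \<notin> y" "j \<notin> y" using y finite_subset by auto
  have "insert i y \<in> johnson_vertices n w \<or> insert j y \<in> johnson_vertices n w"
    using C assms(1) by blast
  then have w: "w = card y + 1"
    using \<open>finite y\<close> \<open>i \<notin> y\<close> \<open>j \<notin> y\<close> by (auto simp: johnson_vertices_def)
  then have "insert i y \<in> johnson_vertices n w" "insert j y \<in> johnson_vertices n w"
    using assms(2-4) y \<open>finite y\<close> \<open>i \<notin> y\<close> \<open>j \<notin> y\<close> by (auto simp: johnson_vertices_def)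
  moreover have "johnson_adj w (insert i y) (insert j y)" "johnson_adj w (insert j y) (insert i y)"
    using johnson_adj_insert_insert[OF \<open>finite y\<close>] \<open>i \<notin> y\<close> \<open>j \<notin> y\<close> assms(2) w
    by (auto simp: johnson_adj_commute)
  ultimately show ?thesis
    using C by (auto simp: oriented_edge_def cut_edges_def)
qed

lemma cut_edges_obtain_oriented_edge:
  assumes "C \<subseteq> johnson_vertices n w" "e \<in> cut_edges w C (johnson_vertices n w - C)"
  obtains i j y where "1 \<le> i" "i < j" "j \<le> n" "y \<in> diff_support n w (char_fun C) i j"
    and "e = oriented_edge C i j y"
proof -
  obtain x x' where e: "e = (x, x')" and "x \<in> C" "x' \<in> johnson_vertices n w" "x' \<notin> C"
    and adj: "johnson_adj w x x'"
    using assms(2) by (auto simp: cut_edges_def)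
  then have "x \<subseteq> {1..n}" "x' \<subseteq> {1..n}" "card x = w" "card x' = w"
    using assms(1) by (auto simp: johnson_vertices_def)
  moreover from this have "finite x" "finite x'" by (auto intro: finite_subset)
  ultimately obtain p q where pq: "p \<noteq> q" "p \<notin> x \<inter> x'" "q \<notin> x \<inter> x'"
    and x: "x = insert p (x \<inter> x')" and x': "x' = insert q (x \<inter> x')"
    using adj johnson_adj_obtain_insert by metis
  show ?thesis
  proof
    show "1 \<le> min p q" "min p q < max p q" "max p q \<le> n"
      using pq x x' \<open>x \<subseteq> {1..n}\<close> \<open>x' \<subseteq> {1..n}\<close> by (auto simp: min_def max_def)
    have "card (x \<inter> x') = w - 1" using adj by (simp add: johnson_adj_def)
    then show "x \<inter> x' \<in> diff_support n w (char_fun C) (min p q) (max p q)"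
      using pq x x' \<open>x \<subseteq> {1..n}\<close> \<open>x \<in> C\<close> \<open>x' \<notin> C\<close>
      by (auto simp: mem_diff_support_char_fun_iff partial_diff_domain_def min_def max_def)
    show "e = oriented_edge C (min p q) (max p q) (x \<inter> x')"
      using \<open>x \<in> C\<close> \<open>x' \<notin> C\<close> x x' by (auto simp: e oriented_edge_def min_def max_def)
  qed
qed

lemma oriented_edge_image:
  assumes "C \<subseteq> johnson_vertices n w"
  shows "(\<lambda>((i, j), y). oriented_edge C i j y) `
           Sigma {(i, j). 1 \<le> i \<and> i < j \<and> j \<le> n} (\<lambda>(i, j). diff_support n w (char_fun C) i j)
         = cut_edges w C (johnson_vertices n w - C)"
    (is "?edge ` ?S = _")
proof (intro equalityI subsetI)
  fix e assume "e \<in> ?edge ` ?S"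
  then obtain i j y where "1 \<le> i" "i < j" "j \<le> n" "y \<in> diff_support n w (char_fun C) i j"
    and "e = oriented_edge C i j y"
    by auto
  then show "e \<in> cut_edges w C (johnson_vertices n w - C)"
    using oriented_edge_mem_cut_edges[OF assms] by blast
next
  fix e assume "e \<in> cut_edges w C (johnson_vertices n w - C)"
  then obtain i j y where "1 \<le> i" "i < j" "j \<le> n" "y \<in> diff_support n w (char_fun C) i j"
    and "e = oriented_edge C i j y"
    using cut_edges_obtain_oriented_edge[OF assms] by blast
  then show "e \<in> ?edge ` ?S" by (auto intro!: image_eqI[where x = "((i, j), y)"])
qed

lemma card_cut_edges_eq_sum_card_diff_support:
  assumes "C \<subseteq> johnson_vertices n w"
  shows "card (cut_edges w C (johnson_vertices n w - C)) =
    (\<Sum>(i, j) \<in> {(i, j). 1 \<le> i \<and> i < j \<and> j \<le> n}. card (diff_support n w (char_fun C) i j))"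
proof -
  let ?P = "{(i, j). 1 \<le> i \<and> i < j \<and> j \<le> n}"
  let ?D = "\<lambda>(i, j). diff_support n w (char_fun C) i j"
  let ?edge = "\<lambda>((i, j), y). oriented_edge C i j y"
  have "finite ?P" by (rule finite_subset[of _ "{1..n} \<times> {1..n}"]) auto
  have "finite (?D p)" for p
    by (rule finite_subset[of _ "Pow {1..n}"]) (auto simp: diff_support_def partial_diff_domain_def)
  have "inj_on ?edge (Sigma ?P ?D)"
    by (rule inj_on_subset[OF inj_on_oriented_edge])
      (auto simp: diff_support_def partial_diff_domain_def)
  then have "card (?edge ` Sigma ?P ?D) = card (Sigma ?P ?D)"
    by (rule card_image)
  then have "card (cut_edges w C (johnson_vertices n w - C)) = card (Sigma ?P ?D)"
    by (simp only: oriented_edge_image[OF assms])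
  also have "\<dots> = (\<Sum>p\<in>?P. card (?D p))"
    using \<open>finite ?P\<close> \<open>\<And>p. finite (?D p)\<close> by (simp add: card_SigmaI)
  finally show ?thesis by (simp add: case_prod_unfold)
qed

lemma cut_size_from_quotient:
  fixes e k l b c :: nat
  assumes "e = k * b" "e = l * c" "b + c > 0"
  shows "real b * real c / (real b + real c) * real (k + l) = real e"
proof -
  have "(b + c) * e = b * (l * c) + c * (k * b)"
    using assms(1,2) by (simp add: algebra_simps)
  also have "\<dots> = b * c * (k + l)" by (simp add: algebra_simps)
  finally have "(real b + real c) * real e = real b * real c * real (k + l)"
    by (metis of_nat_add of_nat_mult)
  moreover have "real b + real c \<noteq> 0" using assms(3) by linarith
  ultimately show ?thesis by (simp add: field_simps)
qed

theorem lemma4: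
  fixes n w a b c d :: nat and C1 C2 :: "nat set set"
  assumes "equitable_partition2 n w C1 C2 a b c d"
    and "b + c > 0"
  shows "real b * real c / (real b + real c) * real (n choose w) =
         (\<Sum>(i, j) \<in> {(i, j). 1 \<le> i \<and> i < j \<and> j \<le> n}.
            real (card (diff_support n w (char_fun C1) i j)))"
proof -
  let ?V = "johnson_vertices n w"
  have C1: "C1 \<subseteq> ?V" and C2: "C2 = ?V - C1"
    and deg1: "\<And>x. x \<in> C1 \<Longrightarrow> card {y \<in> C2. johnson_adj w x y} = b"
    and deg2: "\<And>y. y \<in> C2 \<Longrightarrow> card {x \<in> C1. johnson_adj w x y} = c"
    using assms(1) by (auto simp: equitable_partition2_def johnson_adj_commute)
  have "finite C1" using C1 finite_johnson_vertices by (rule finite_subset)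
  have "finite C2" by (simp add: C2 finite_johnson_vertices)
  have "card (cut_edges w C1 C2) = card C1 * b"
    unfolding cut_edges_def using \<open>finite C1\<close> \<open>finite C2\<close> deg1 by (rule card_related_pairs_left)
  moreover have "card (cut_edges w C1 C2) = card C2 * c"
    unfolding cut_edges_def using \<open>finite C1\<close> \<open>finite C2\<close> deg2 by (rule card_related_pairs_right)
  ultimately have "real b * real c / (real b + real c) * real (card C1 + card C2)
      = card (cut_edges w C1 C2)"
    using assms(2) by (rule cut_size_from_quotient)
  moreover have "card C1 + card C2 = n choose w"
    using card_mono[OF finite_johnson_vertices C1] \<open>finite C1\<close>
    by (simp add: C2 C1 card_Diff_subset card_johnson_vertices)
  ultimately have "real b * real c / (real b + real c) * real (n choose w)
      = card (cut_edges w C1 C2)"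
    by simp
  also have "\<dots> = (\<Sum>(i, j) \<in> {(i, j). 1 \<le> i \<and> i < j \<and> j \<le> n}.
            real (card (diff_support n w (char_fun C1) i j)))"
    using card_cut_edges_eq_sum_card_diff_support[OF C1] by (simp add: C2 of_nat_sum case_prod_unfold)
  finally show ?thesis .
qed

end
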